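(* There is a polynomial-time algorithm for Interval Scheduling with Colors.
   Context: Interval Scheduling with Colors: the input is a finite set of jobs with weights $w\ge0$, where each job $j$ has two half-open intervals $[\ell_j,r_j)$ and $[a_j,b_j)$ with $\ell_j\le a_j<b_j\le r_j$; the inner interval $[a_j,b_j)$ is called red and $[\ell_j,r_j)\setminus[a_j,b_j)$ blue. A set $S$ of jobs is feasible if for any two distinct jobs $j,k\in S$, $[a_j,b_j)\cap[\ell_k,r_k)=\emptyset$ and $[a_k,b_k)\cap[\ell_j,r_j)=\emptyset$ (the red interval of a chosen job meets neither the red nor the blue interval of another chosen job). The task is to find a feasible set of maximum total weight. *)

theory Defs
  imports Main "HOL.Real"
begin

text \<open>A job j: outer interval [l_j, r_j), red inner interval [a_j, b_j), weight w_j.\<close>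
record job =
  lft :: real
  ra  :: real
  rb  :: real
  rgt :: real
  wt  :: real

definition valid_job :: "job \<Rightarrow> bool" where
  "valid_job j \<longleftrightarrow> lft j \<le> ra j \<and> ra j < rb j \<and> rb j \<le> rgt j \<and> wt j \<ge> 0"

text \<open>Jobs of an instance are indexed by 0..<length js (repeated data = distinct jobs).\<close>
definition feasible :: "job list \<Rightarrow> nat set \<Rightarrow> bool" where
  "feasible js S \<longleftrightarrow> S \<subseteq> {0..<length js} \<and>
     (\<forall>j\<in>S. \<forall>k\<in>S. j \<noteq> k \<longrightarrow>
        {ra (js!j)..<rb (js!j)} \<inter> {lft (js!k)..<rgt (js!k)} = {} \<and>
        {ra (js!k)..<rb (js!k)} \<inter> {lft (js!j)..<rgt (js!j)} = {})"

definition weight :: "job list \<Rightarrow> nat set \<Rightarrow> real" where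
  "weight js S = (\<Sum>j\<in>S. wt (js!j))"

definition optimal :: "job list \<Rightarrow> nat set \<Rightarrow> bool" where
  "optimal js S \<longleftrightarrow> feasible js S \<and> (\<forall>T. feasible js T \<longrightarrow> weight js T \<le> weight js S)"

datatype instr =
    NConst nat nat
  | NAdd nat nat nat
  | NSub nat nat nat
  | NLoad nat nat
  | NStore nat nat
  | RConst nat real
  | RAdd nat nat nat
  | RSub nat nat nat
  | RLoad nat nat
  | RStore nat nat
  | Jmp nat
  | JmpZ nat nat
  | JmpLe nat nat nat
  | Halt

record mstate =
  pc   :: nat
  nreg :: "nat \<Rightarrow> nat"
  rreg :: "nat \<Rightarrow> real"

fun exec :: "instr \<Rightarrow> mstate \<Rightarrow> mstate" where
  "exec (NConst i c) s = s\<lparr>pc := Suc (pc s), nreg := (nreg s)(i := c)\<rparr>"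
| "exec (NAdd i j k) s = s\<lparr>pc := Suc (pc s), nreg := (nreg s)(i := nreg s j + nreg s k)\<rparr>"
| "exec (NSub i j k) s = s\<lparr>pc := Suc (pc s), nreg := (nreg s)(i := nreg s j - nreg s k)\<rparr>"
| "exec (NLoad i j) s = s\<lparr>pc := Suc (pc s), nreg := (nreg s)(i := nreg s (nreg s j))\<rparr>"
| "exec (NStore i j) s = s\<lparr>pc := Suc (pc s), nreg := (nreg s)(nreg s i := nreg s j)\<rparr>"
| "exec (RConst i c) s = s\<lparr>pc := Suc (pc s), rreg := (rreg s)(i := c)\<rparr>"
| "exec (RAdd i j k) s = s\<lparr>pc := Suc (pc s), rreg := (rreg s)(i := rreg s j + rreg s k)\<rparr>"
| "exec (RSub i j k) s = s\<lparr>pc := Suc (pc s), rreg := (rreg s)(i := rreg s j - rreg s k)\<rparr>"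
| "exec (RLoad i j) s = s\<lparr>pc := Suc (pc s), rreg := (rreg s)(i := rreg s (nreg s j))\<rparr>"
| "exec (RStore i j) s = s\<lparr>pc := Suc (pc s), rreg := (rreg s)(nreg s i := rreg s j)\<rparr>"
| "exec (Jmp t) s = s\<lparr>pc := t\<rparr>"
| "exec (JmpZ i t) s = s\<lparr>pc := (if nreg s i = 0 then t else Suc (pc s))\<rparr>"
| "exec (JmpLe i j t) s = s\<lparr>pc := (if rreg s i \<le> rreg s j then t else Suc (pc s))\<rparr>"
| "exec Halt s = s"

definition halted :: "instr list \<Rightarrow> mstate \<Rightarrow> bool" where
  "halted P s \<longleftrightarrow> length P \<le> pc s \<or> P ! pc s = Halt"

definition step :: "instr list \<Rightarrow> mstate \<Rightarrow> mstate" where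
  "step P s = (if halted P s then s else exec (P ! pc s) s)"

definition run :: "instr list \<Rightarrow> nat \<Rightarrow> mstate \<Rightarrow> mstate" where
  "run P k s = (step P ^^ k) s"

definition job_field :: "nat \<Rightarrow> job \<Rightarrow> real" where
  "job_field m j = (if m = 0 then lft j else if m = 1 then ra j else if m = 2 then rb j
                    else if m = 3 then rgt j else wt j)"

definition init :: "job list \<Rightarrow> mstate" where
  "init js = \<lparr>pc = 0,
              nreg = (\<lambda>i. if i = 0 then length js else 0),
              rreg = (\<lambda>i. if i < 5 * length js then job_field (i mod 5) (js ! (i div 5)) else 0)\<rparr>"

definition out_set :: "nat \<Rightarrow> mstate \<Rightarrow> nat set" where
  "out_set n s = {i. i < n \<and> nreg s (Suc i) \<noteq> 0}"

definition solves_ISC_polytime :: "instr list \<Rightarrow> bool" where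
  "solves_ISC_polytime P \<longleftrightarrow> (\<exists>c d :: nat. \<forall>js. (\<forall>j\<in>set js. valid_job j) \<longrightarrow>
     (\<exists>k \<le> c * (length js + 1) ^ d.
        halted P (run P k (init js)) \<and> optimal js (out_set (length js) (run P k (init js)))))"

end

theory Submission
  imports Defs
begin

text \<open>
  For valid jobs, two jobs are compatible iff one of them precedes the other, where j precedes k
  when r_j <= a_k and b_j <= l_k. Precedence is transitive and strictly increases a, so the
  feasible sets are exactly the chains of this strict order, and every nonempty one has a last
  job. Hence the best weight of a feasible set ending with k is w_k plus the largest such weight
  over the predecessors of k (or 0 if there is none), and computing these values in order of
  increasing a costs O(n) per job; following the recorded predecessors back from a job of largest
  value yields an optimal set. The algorithm is written as a program for the given register
  machine and verified by loop invariants; it takes 34 n^2 + O(n) steps.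
\<close>

section \<open>Feasible sets as chains of the precedence order\<close>

definition valid_instance :: "job list \<Rightarrow> bool" where
  "valid_instance js \<longleftrightarrow> (\<forall>j<length js. valid_job (js!j))"

lemma valid_instanceD:
  "valid_instance js \<Longrightarrow> j < length js \<Longrightarrow>
   lft (js!j) \<le> ra (js!j) \<and> ra (js!j) < rb (js!j) \<and> rb (js!j) \<le> rgt (js!j) \<and> 0 \<le> wt (js!j)"
  unfolding valid_instance_def valid_job_def by blast

definition precedes :: "job list \<Rightarrow> nat \<Rightarrow> nat \<Rightarrow> bool" where
  "precedes js j k \<longleftrightarrow> rgt (js!j) \<le> ra (js!k) \<and> rb (js!j) \<le> lft (js!k)"

lemma precedes_ra_less:
  "valid_instance js \<Longrightarrow> j < length js \<Longrightarrow> k < length js \<Longrightarrow> precedes js j k \<Longrightarrow> ra (js!j) < ra (js!k)"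
  using valid_instanceD[of js j] valid_instanceD[of js k] unfolding precedes_def by linarith

lemma precedes_irrefl: "valid_instance js \<Longrightarrow> j < length js \<Longrightarrow> \<not> precedes js j j"
  using precedes_ra_less by blast

lemma precedes_trans:
  "valid_instance js \<Longrightarrow> i < length js \<Longrightarrow> j < length js \<Longrightarrow> k < length js \<Longrightarrow>
    precedes js i j \<Longrightarrow> precedes js j k \<Longrightarrow> precedes js i k"
  using valid_instanceD[of js i] valid_instanceD[of js j] valid_instanceD[of js k]
  unfolding precedes_def by linarith

lemma disjoint_atLeastLessThan_iff:
  fixes a b c d :: "'a :: linorder"
  assumes "a < b" "c < d"
  shows "{a..<b} \<inter> {c..<d} = {} \<longleftrightarrow> b \<le> c \<or> d \<le> a"
proof
  assume "{a..<b} \<inter> {c..<d} = {}"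
  then have "max a c \<notin> {a..<b} \<inter> {c..<d}" by blast
  then show "b \<le> c \<or> d \<le> a" using assms by (auto simp: max_def split: if_splits)
qed auto

lemma compatible_iff_precedes:
  assumes "valid_instance js" "j < length js" "k < length js"
  shows "({ra (js!j)..<rb (js!j)} \<inter> {lft (js!k)..<rgt (js!k)} = {} \<and>
          {ra (js!k)..<rb (js!k)} \<inter> {lft (js!j)..<rgt (js!j)} = {})
     \<longleftrightarrow> precedes js j k \<or> precedes js k j"
proof -
  have vj: "lft (js!j) \<le> ra (js!j)" "ra (js!j) < rb (js!j)" "rb (js!j) \<le> rgt (js!j)"
    and vk: "lft (js!k) \<le> ra (js!k)" "ra (js!k) < rb (js!k)" "rb (js!k) \<le> rgt (js!k)"
    using valid_instanceD[OF assms(1,2)] valid_instanceD[OF assms(1,3)] by auto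
  have "{ra (js!j)..<rb (js!j)} \<inter> {lft (js!k)..<rgt (js!k)} = {} \<longleftrightarrow>
      rb (js!j) \<le> lft (js!k) \<or> rgt (js!k) \<le> ra (js!j)"
    "{ra (js!k)..<rb (js!k)} \<inter> {lft (js!j)..<rgt (js!j)} = {} \<longleftrightarrow>
      rb (js!k) \<le> lft (js!j) \<or> rgt (js!j) \<le> ra (js!k)"
    using vj vk by (intro disjoint_atLeastLessThan_iff; linarith)+
  then show ?thesis unfolding precedes_def using vj vk by argo
qed

lemma feasible_iff_precedes:
  assumes "valid_instance js"
  shows "feasible js S \<longleftrightarrow>
    S \<subseteq> {0..<length js} \<and> (\<forall>j\<in>S. \<forall>k\<in>S. j \<noteq> k \<longrightarrow> precedes js j k \<or> precedes js k j)"
  unfolding feasible_def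
proof (intro conj_cong refl ball_cong imp_cong)
  fix j k assume "S \<subseteq> {0..<length js}" "j \<in> S" "k \<in> S"
  then show "({ra (js!j)..<rb (js!j)} \<inter> {lft (js!k)..<rgt (js!k)} = {} \<and>
       {ra (js!k)..<rb (js!k)} \<inter> {lft (js!j)..<rgt (js!j)} = {})
      \<longleftrightarrow> precedes js j k \<or> precedes js k j"
    by (intro compatible_iff_precedes[OF assms]) auto
qed

lemma feasible_finite: "feasible js S \<Longrightarrow> finite S"
  unfolding feasible_def using finite_subset by blast

lemma feasible_subset: "feasible js S \<Longrightarrow> T \<subseteq> S \<Longrightarrow> feasible js T"
  unfolding feasible_def by blast

section \<open>The dynamic program\<close>

definition feasible_ending_at :: "job list \<Rightarrow> nat set \<Rightarrow> nat \<Rightarrow> bool" where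
  "feasible_ending_at js S k \<longleftrightarrow> feasible js S \<and> k \<in> S \<and> (\<forall>j\<in>S. j \<noteq> k \<longrightarrow> precedes js j k)"

lemma feasible_has_last:
  assumes "valid_instance js" "feasible js S" "S \<noteq> {}"
  obtains k where "feasible_ending_at js S k"
proof -
  have fin: "finite S" using feasible_finite[OF assms(2)] .
  have "Max ((\<lambda>j. ra (js!j)) ` S) \<in> (\<lambda>j. ra (js!j)) ` S" using fin assms(3) by simp
  then obtain k where "k \<in> S" "ra (js!k) = Max ((\<lambda>j. ra (js!j)) ` S)" by force
  then have k: "k \<in> S" "\<forall>j\<in>S. ra (js!j) \<le> ra (js!k)" using fin by simp_all
  have "precedes js j k" if "j \<in> S" "j \<noteq> k" for j
  proof -
    have "j < length js" "k < length js" using assms(2) k(1) that(1) unfolding feasible_def by auto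
    moreover have "precedes js j k \<or> precedes js k j"
      using assms(2) k(1) that unfolding feasible_iff_precedes[OF assms(1)] by blast
    ultimately show ?thesis using precedes_ra_less[OF assms(1)] k(2) that(1) by force
  qed
  then show ?thesis using that assms(2) k(1) unfolding feasible_ending_at_def by blast
qed

lemma weight_insert: "finite S \<Longrightarrow> k \<notin> S \<Longrightarrow> weight js (insert k S) = wt (js!k) + weight js S"
  unfolding weight_def by simp

lemma feasible_insert:
  assumes "valid_instance js" "feasible js V" "c < length js"
    "\<forall>v\<in>V. precedes js c v \<or> precedes js v c"
  shows "feasible js (insert c V)"
  using assms(2-4) unfolding feasible_iff_precedes[OF assms(1)] by auto

lemma feasible_ending_at_insert:
  assumes "valid_instance js" "feasible_ending_at js S j" "precedes js j k" "k < length js"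
  shows "feasible_ending_at js (insert k S) k" "weight js (insert k S) = wt (js!k) + weight js S"
proof -
  have S: "feasible js S" "j \<in> S" "\<forall>i\<in>S. i \<noteq> j \<longrightarrow> precedes js i j"
    using assms(2) unfolding feasible_ending_at_def by auto
  have "precedes js i k" if "i \<in> S" for i
  proof (cases "i = j")
    case False
    have "i < length js" "j < length js" using S(1,2) that unfolding feasible_def by auto
    then show ?thesis using precedes_trans[OF assms(1) _ _ assms(4)] S(3) that False assms(3) by blast
  qed (use assms(3) in simp)
  then have "feasible js (insert k S)" "k \<notin> S"
    using feasible_insert[OF assms(1) S(1) assms(4)] precedes_irrefl[OF assms(1,4)] by auto
  then show "feasible_ending_at js (insert k S) k" "weight js (insert k S) = wt (js!k) + weight js S"
    using \<open>\<And>i. i \<in> S \<Longrightarrow> precedes js i k\<close> weight_insert[OF feasible_finite[OF S(1)]]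
    unfolding feasible_ending_at_def by auto
qed

definition best_ending_at :: "job list \<Rightarrow> nat \<Rightarrow> real \<Rightarrow> bool" where
  "best_ending_at js k v \<longleftrightarrow>
     (\<exists>S. feasible_ending_at js S k \<and> weight js S = v) \<and>
     (\<forall>S. feasible_ending_at js S k \<longrightarrow> weight js S \<le> v)"

lemma best_ending_at_recurrence:
  assumes valid: "valid_instance js" and k: "k < length js"
    and preds: "\<And>j. j < length js \<Longrightarrow> precedes js j k \<Longrightarrow> j \<in> P"
    and best: "\<And>j. j \<in> P \<Longrightarrow> best_ending_at js j (val j)"
    and M: "0 \<le> M" "M = 0 \<or> (\<exists>j<length js. precedes js j k \<and> M = val j)"
    and M_max: "\<And>j. j < length js \<Longrightarrow> precedes js j k \<Longrightarrow> val j \<le> M"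
  shows "best_ending_at js k (wt (js!k) + M)"
  unfolding best_ending_at_def
proof (intro conjI allI impI)
  show "\<exists>S. feasible_ending_at js S k \<and> weight js S = wt (js!k) + M"
    using M(2)
  proof
    assume "M = 0"
    moreover have "feasible_ending_at js {k} k"
      using k unfolding feasible_ending_at_def feasible_def by auto
    ultimately show ?thesis by (auto simp: weight_def)
  next
    assume "\<exists>j<length js. precedes js j k \<and> M = val j"
    then obtain j S where jS: "precedes js j k" "M = val j"
      "feasible_ending_at js S j" "weight js S = val j"
      using best preds unfolding best_ending_at_def by blast
    then show ?thesis using feasible_ending_at_insert[OF valid jS(3,1) k] by auto
  qed
next
  fix S assume S: "feasible_ending_at js S k"
  then have fS: "feasible js S" "k \<in> S" "\<forall>j\<in>S. j \<noteq> k \<longrightarrow> precedes js j k"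
    unfolding feasible_ending_at_def by auto
  have w: "weight js S = wt (js!k) + weight js (S - {k})"
    using fS(1,2) feasible_finite unfolding weight_def by (meson sum.remove)
  show "weight js S \<le> wt (js!k) + M"
  proof (cases "S - {k} = {}")
    case True
    then have "weight js (S - {k}) = 0" unfolding weight_def by (simp only: sum.empty)
    then show ?thesis using w M(1) by simp
  next
    case False
    have "feasible js (S - {k})" using feasible_subset[OF fS(1)] by blast
    then obtain j where j: "feasible_ending_at js (S - {k}) j"
      using feasible_has_last[OF valid _ False] by blast
    then have "j \<in> S" "j \<noteq> k" unfolding feasible_ending_at_def by auto
    then have jk: "j < length js" "precedes js j k" using fS unfolding feasible_def by auto
    have "weight js (S - {k}) \<le> val j"
      using best[OF preds[OF jk]] j unfolding best_ending_at_def by blast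
    also have "\<dots> \<le> M" using M_max[OF jk] .
    finally show ?thesis using w by simp
  qed
qed

lemma feasible_weight_le:
  assumes valid: "valid_instance js"
    and best: "\<And>j. j < length js \<Longrightarrow> best_ending_at js j (val j)"
    and G: "\<And>j. j < length js \<Longrightarrow> val j \<le> G" "0 \<le> G"
    and T: "feasible js T"
  shows "weight js T \<le> G"
proof (cases "T = {}")
  case True
  then show ?thesis using G(2) by (simp add: weight_def)
next
  case False
  then obtain k where k: "feasible_ending_at js T k" using feasible_has_last[OF valid T] by blast
  then have "k < length js" unfolding feasible_ending_at_def feasible_def by auto
  have "weight js T \<le> val k" using best[OF \<open>k < length js\<close>] k unfolding best_ending_at_def by blast
  also have "\<dots> \<le> G" using G(1)[OF \<open>k < length js\<close>] .
  finally show ?thesis .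
qed

text \<open>Job indices are shifted by one, 0 meaning none, as in the registers of the program below.\<close>

definition running_max :: "nat set \<Rightarrow> (nat \<Rightarrow> real) \<Rightarrow> real \<Rightarrow> nat \<Rightarrow> bool" where
  "running_max A val M p \<longleftrightarrow> 0 \<le> M \<and>
     (p = 0 \<and> M = 0 \<or> p \<noteq> 0 \<and> p - 1 \<in> A \<and> M = val (p - 1)) \<and> (\<forall>i\<in>A. val i \<le> M)"

lemma running_max_empty: "running_max {} val 0 0"
  unfolding running_max_def by simp

lemma running_max_insert:
  assumes "running_max A val M p" "\<forall>i\<in>A. val' i = val i"
  shows "running_max (insert j A) val'
    (if val' j \<le> M then M else val' j) (if val' j \<le> M then p else Suc j)"
  using assms unfolding running_max_def by (cases "val' j \<le> M") auto

definition next_unprocessed_upto :: "job list \<Rightarrow> nat set \<Rightarrow> nat \<Rightarrow> nat \<Rightarrow> bool" where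
  "next_unprocessed_upto js P m c \<longleftrightarrow>
     (c = 0 \<longrightarrow> (\<forall>i<m. i \<in> P)) \<and>
     (c \<noteq> 0 \<longrightarrow> c - 1 < m \<and> c - 1 \<notin> P \<and> (\<forall>i<m. i \<notin> P \<longrightarrow> ra (js!(c - 1)) \<le> ra (js!i)))"

lemma next_unprocessed_upto_0: "next_unprocessed_upto js P 0 0"
  unfolding next_unprocessed_upto_def by simp

lemma next_unprocessed_upto_Suc:
  assumes "next_unprocessed_upto js P j c"
  shows "next_unprocessed_upto js P (Suc j)
    (if j \<notin> P \<and> (c = 0 \<or> \<not> ra (js!(c - 1)) \<le> ra (js!j)) then Suc j else c)"
  using assms unfolding next_unprocessed_upto_def by (auto simp: less_Suc_eq)

lemma next_unprocessed_upto_nonzero: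
  assumes "next_unprocessed_upto js P m c" "P \<subseteq> {0..<m}" "card P < m"
  shows "c \<noteq> 0"
proof
  assume "c = 0"
  then have "P = {0..<m}" using assms(1,2) unfolding next_unprocessed_upto_def by auto
  then show False using assms(3) by simp
qed

definition pred_link :: "job list \<Rightarrow> (nat \<Rightarrow> real) \<Rightarrow> nat \<Rightarrow> nat \<Rightarrow> bool" where
  "pred_link js val p k \<longleftrightarrow> p = 0 \<and> val k = wt (js!k) \<or>
     p \<noteq> 0 \<and> p - 1 < length js \<and> precedes js (p - 1) k \<and> val k = wt (js!k) + val (p - 1)"

definition dp_invariant :: "job list \<Rightarrow> nat set \<Rightarrow> (nat \<Rightarrow> real) \<Rightarrow> (nat \<Rightarrow> nat) \<Rightarrow> bool" where
  "dp_invariant js P val pred \<longleftrightarrow> P \<subseteq> {0..<length js} \<and>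
     (\<forall>j\<in>P. \<forall>i<length js. i \<notin> P \<longrightarrow> ra (js!j) \<le> ra (js!i)) \<and>
     (\<forall>j\<in>P. best_ending_at js j (val j) \<and> pred_link js val (pred j) j)"

lemma dp_invariant_empty: "dp_invariant js {} val pred"
  unfolding dp_invariant_def by simp

lemma dp_invariant_insert:
  assumes valid: "valid_instance js" and dp: "dp_invariant js P val pred"
    and k: "next_unprocessed_upto js P (length js) (Suc k)"
    and M: "running_max {i. i < length js \<and> precedes js i k} val M p"
  shows "dp_invariant js (insert k P) (val(k := wt (js!k) + M)) (pred(k := p))"
proof -
  let ?val = "val(k := wt (js!k) + M)"
  have kP: "k < length js" "k \<notin> P" "\<forall>i<length js. i \<notin> P \<longrightarrow> ra (js!k) \<le> ra (js!i)"
    using k unfolding next_unprocessed_upto_def by auto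
  have P: "P \<subseteq> {0..<length js}" "\<forall>j\<in>P. \<forall>i<length js. i \<notin> P \<longrightarrow> ra (js!j) \<le> ra (js!i)"
    "\<forall>j\<in>P. best_ending_at js j (val j) \<and> pred_link js val (pred j) j"
    using dp unfolding dp_invariant_def by auto
  have M': "0 \<le> M" "p = 0 \<and> M = 0 \<or> p \<noteq> 0 \<and> p - 1 < length js \<and> precedes js (p - 1) k \<and> M = val (p - 1)"
    "\<And>i. i < length js \<Longrightarrow> precedes js i k \<Longrightarrow> val i \<le> M"
    using M unfolding running_max_def by auto
  have preds: "i \<in> P" if "i < length js" "precedes js i k" for i
    using kP(3) precedes_ra_less[OF valid that(1) kP(1) that(2)] that(1) by force
  have not_k: "i \<noteq> k" if "i < length js" "precedes js i j" "j \<in> P" for i j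
  proof
    assume "i = k"
    then have "ra (js!j) \<le> ra (js!k)" using P(1,2) kP(1,2) that(3) by auto
    moreover have "ra (js!i) < ra (js!j)"
      using precedes_ra_less[OF valid that(1) _ that(2)] P(1) that(3) by auto
    ultimately show False using \<open>i = k\<close> by simp
  qed
  have best_k: "best_ending_at js k (wt (js!k) + M)"
    by (rule best_ending_at_recurrence[where P = P and val = val, OF valid kP(1) preds])
      (use P(3) M' in auto)
  have link_k: "pred_link js ?val p k"
    using M'(2) precedes_irrefl[OF valid kP(1)] unfolding pred_link_def by auto
  have link_P: "pred_link js ?val (pred j) j" if "j \<in> P" for j
  proof -
    have jk: "j \<noteq> k" using that kP(2) by blast
    have "pred_link js val (pred j) j" using P(3) that by blast
    then show ?thesis using jk not_k[OF _ _ that, of "pred j - 1"] unfolding pred_link_def by auto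
  qed
  have "insert k P \<subseteq> {0..<length js}" using P(1) kP(1) by auto
  moreover have "\<forall>j\<in>insert k P. \<forall>i<length js. i \<notin> insert k P \<longrightarrow> ra (js!j) \<le> ra (js!i)"
    using P(2) kP(3) by blast
  moreover have "\<forall>j\<in>insert k P. best_ending_at js j (?val j) \<and> pred_link js ?val ((pred(k := p)) j) j"
    using best_k link_k link_P P(3) kP(2) by auto
  ultimately show ?thesis unfolding dp_invariant_def by blast
qed

text \<open>Invariant of backtracking along predecessor links from a job of value G.\<close>

definition trace_inv :: "job list \<Rightarrow> (nat \<Rightarrow> real) \<Rightarrow> real \<Rightarrow> nat set \<Rightarrow> nat \<Rightarrow> bool" where
  "trace_inv js val G V c \<longleftrightarrow> feasible js V \<and>
     (c \<noteq> 0 \<longrightarrow> c - 1 < length js \<and> (\<forall>v\<in>V. precedes js (c - 1) v)) \<and>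
     weight js V + (if c = 0 then 0 else val (c - 1)) = G"

lemma trace_inv_start:
  "trace_inv js val G {} c \<longleftrightarrow> (c = 0 \<and> G = 0 \<or> c \<noteq> 0 \<and> c - 1 < length js \<and> G = val (c - 1))"
  unfolding trace_inv_def feasible_def weight_def by auto

lemma trace_inv_step:
  assumes valid: "valid_instance js" and V: "trace_inv js val G V c" "c \<noteq> 0"
    and link: "pred_link js val p (c - 1)"
  shows "trace_inv js val G (insert (c - 1) V) p" "c - 1 \<notin> V"
proof -
  have c: "c - 1 < length js" "\<forall>v\<in>V. precedes js (c - 1) v" "feasible js V"
    "weight js V + val (c - 1) = G"
    using V unfolding trace_inv_def by auto
  show "c - 1 \<notin> V" using c(1,2) precedes_irrefl[OF valid] by blast
  then have w: "weight js (insert (c - 1) V) = wt (js!(c - 1)) + weight js V"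
    using weight_insert feasible_finite[OF c(3)] by blast
  have "precedes js (p - 1) v" if "p \<noteq> 0" "v \<in> insert (c - 1) V" for v
  proof -
    have p: "p - 1 < length js" "precedes js (p - 1) (c - 1)"
      using link that(1) unfolding pred_link_def by auto
    have "v < length js" using that(2) c(1,3) unfolding feasible_def by auto
    then show ?thesis using that(2) p c(2) precedes_trans[OF valid p(1) c(1)] by auto
  qed
  moreover have "feasible js (insert (c - 1) V)"
    using feasible_insert[OF valid c(3,1)] c(2) by blast
  ultimately show "trace_inv js val G (insert (c - 1) V) p"
    using link c(4) w unfolding trace_inv_def pred_link_def by auto
qed

section \<open>Bounded reachability of machine states\<close>

definition reaches :: "instr list \<Rightarrow> mstate \<Rightarrow> (mstate \<Rightarrow> bool) \<Rightarrow> nat \<Rightarrow> bool" where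
  "reaches P s Q b \<longleftrightarrow> (\<exists>t\<le>b. Q (run P t s))"

lemma run_add: "run P (t2 + t1) s = run P t2 (run P t1 s)"
  by (simp add: run_def funpow_add)

lemma reaches_now: "Q s \<Longrightarrow> reaches P s Q b"
  unfolding reaches_def by (rule exI[of _ 0]) (simp add: run_def)

lemma reaches_mono: "reaches P s Q b \<Longrightarrow> b \<le> b' \<Longrightarrow> (\<And>s. Q s \<Longrightarrow> Q' s) \<Longrightarrow> reaches P s Q' b'"
  unfolding reaches_def by (meson order_trans)

lemma reaches_trans:
  "reaches P s Q1 b1 \<Longrightarrow> (\<And>s'. Q1 s' \<Longrightarrow> reaches P s' Q2 b2) \<Longrightarrow> reaches P s Q2 (b1 + b2)"
  unfolding reaches_def by (metis add_le_mono run_add add.commute)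

lemma reaches_exec:
  assumes "0 < b \<and> pc s < length P \<and> P ! pc s \<noteq> Halt" "reaches P (exec (P ! pc s) s) Q (b - 1)"
  shows "reaches P s Q b"
proof -
  obtain t where t: "t \<le> b - 1" "Q (run P t (exec (P ! pc s) s))"
    using assms(2) unfolding reaches_def by blast
  have "run P (Suc t) s = run P t (exec (P ! pc s) s)"
    using assms(1) run_add[of P t 1 s] by (simp add: run_def step_def halted_def)
  then show ?thesis unfolding reaches_def using t assms(1) by (intro exI[of _ "Suc t"]) auto
qed

lemma reaches_loop:
  assumes step: "\<And>s m. I s m \<Longrightarrow> reaches P s Q d \<or> (0 < m \<and> reaches P s (\<lambda>s'. I s' (m - 1)) c)"
  shows "I s m \<Longrightarrow> reaches P s Q (m * c + d)"
proof (induction m arbitrary: s)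
  case 0
  then show ?case using step[OF 0] by simp
next
  case (Suc m)
  from step[OF Suc.prems] show ?case
  proof
    assume "reaches P s Q d"
    then show ?thesis by (rule reaches_mono) auto
  next
    assume "0 < Suc m \<and> reaches P s (\<lambda>s'. I s' (Suc m - 1)) c"
    then have "reaches P s Q (c + (m * c + d))" by (auto intro: reaches_trans Suc.IH)
    then show ?thesis by (simp add: add.assoc)
  qed
qed

lemma reaches_countdown:
  assumes "\<And>s. I s 0 \<Longrightarrow> reaches P s Q d" "\<And>s m. I s (Suc m) \<Longrightarrow> reaches P s (\<lambda>s'. I s' m) c"
  shows "I s m \<Longrightarrow> reaches P s Q (m * c + d)"
proof (rule reaches_loop[where I = I])
  fix s m assume "I s m"
  then show "reaches P s Q d \<or> 0 < m \<and> reaches P s (\<lambda>s'. I s' (m - 1)) c"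
    using assms by (cases m) auto
qed

section \<open>The program and its invariants\<close>

text \<open>
  The fields of job j are copied to
  R(5n + 20 + 5j + f), f < 5, and the weight field then holds the value of j in the dynamic
  program; N(n + 20 + j) flags the processed jobs, N(2n + 20 + j) holds the predecessor of j and
  N(3n + 20 + j) flags the output set.
  Instructions 0-27 set up the constants and copy the input; 28-90 form the main loop (32-47
  select the unprocessed job k with least a_k, 48-57 mark it, 58-78 scan its predecessors for the
  best value, 79-90 store the value and predecessor of k and update the overall best job); 91-98
  follow the predecessors of the best job, flagging the output set; 99-140 move the flags to
  N1..Nn, the first fifteen by explicit loads because N1..N15 are scratch registers.
\<close>

definition prog :: "instr list" where
  "prog = [NConst 1 1,
    NConst 2 5,
    NConst 15 0,
    NConst 3 20,
    NAdd 3 3 0,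
    NAdd 3 3 0,
    NAdd 3 3 0,
    NAdd 3 3 0,
    NAdd 3 3 0,
    NConst 4 20,
    NAdd 4 4 0,
    NAdd 5 4 0,
    NAdd 6 5 0,
    NConst 8 0,
    NAdd 9 3 15,
    NConst 12 20,
    NSub 12 3 12,
    JmpZ 12 24,
    RLoad 0 8,
    RStore 9 0,
    NAdd 8 8 1,
    NAdd 9 9 1,
    NSub 12 12 1,
    Jmp 17,
    RConst 5 0,
    RConst 4 0,
    NConst 14 0,
    NAdd 7 0 15,
    JmpZ 7 91,
    NConst 10 0,
    NConst 8 0,
    NAdd 9 3 15,
    NSub 12 0 8,
    JmpZ 12 48,
    NAdd 12 4 8,
    NLoad 12 12,
    JmpZ 12 38,
    Jmp 45,
    NAdd 12 9 1,
    RLoad 0 12,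
    JmpZ 10 42,
    JmpLe 2 0 45,
    NAdd 10 8 1,
    NAdd 11 9 15,
    RAdd 2 0 5,
    NAdd 8 8 1,
    NAdd 9 9 2,
    Jmp 32,
    NSub 10 10 1,
    NAdd 12 4 10,
    NStore 12 1,
    NAdd 12 11 1,
    RLoad 6 12,
    RLoad 7 11,
    RConst 3 0,
    NConst 13 0,
    NConst 8 0,
    NAdd 9 3 15,
    NSub 12 0 8,
    JmpZ 12 79,
    NConst 12 3,
    NAdd 12 9 12,
    RLoad 0 12,
    JmpLe 0 6 65,
    Jmp 76,
    NConst 12 2,
    NAdd 12 9 12,
    RLoad 0 12,
    JmpLe 0 7 70,
    Jmp 76,
    NConst 12 4,
    NAdd 12 9 12,
    RLoad 0 12,
    JmpLe 0 3 76,
    RAdd 3 0 5,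
    NAdd 13 8 1,
    NAdd 8 8 1,
    NAdd 9 9 2,
    Jmp 58,
    NConst 12 4,
    NAdd 12 11 12,
    RLoad 0 12,
    RAdd 0 0 3,
    RStore 12 0,
    NAdd 12 5 10,
    NStore 12 13,
    JmpLe 0 4 89,
    RAdd 4 0 5,
    NAdd 14 10 1,
    NSub 7 7 1,
    Jmp 28,
    NAdd 10 14 15,
    JmpZ 10 99,
    NSub 12 10 1,
    NAdd 13 6 12,
    NStore 13 1,
    NAdd 13 5 12,
    NLoad 10 13,
    Jmp 92,
    NAdd 8 0 15,
    NConst 12 15,
    NSub 12 8 12,
    JmpZ 12 109,
    NAdd 13 6 8,
    NSub 13 13 1,
    NLoad 12 13,
    NStore 8 12,
    NSub 8 8 1,
    Jmp 100,
    NAdd 0 6 15,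
    NConst 15 1,
    NLoad 1 0,
    NAdd 0 0 15,
    NLoad 2 0,
    NAdd 0 0 15,
    NLoad 3 0,
    NAdd 0 0 15,
    NLoad 4 0,
    NAdd 0 0 15,
    NLoad 5 0,
    NAdd 0 0 15,
    NLoad 6 0,
    NAdd 0 0 15,
    NLoad 7 0,
    NAdd 0 0 15,
    NLoad 8 0,
    NAdd 0 0 15,
    NLoad 9 0,
    NAdd 0 0 15,
    NLoad 10 0,
    NAdd 0 0 15,
    NLoad 11 0,
    NAdd 0 0 15,
    NLoad 12 0,
    NAdd 0 0 15,
    NLoad 13 0,
    NAdd 0 0 15,
    NLoad 14 0,
    NAdd 0 0 15,
    NLoad 15 0,
    Halt]"

lemma prog_length: "length prog = 141"
  by (simp add: prog_def)

lemmas prog_simps = prog_length arg_cong[where f = "\<lambda>p. p ! n" for n, OF prog_def]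

definition layout :: "nat \<Rightarrow> mstate \<Rightarrow> bool" where
  "layout n s \<longleftrightarrow> nreg s 0 = n \<and> nreg s 1 = 1 \<and> nreg s 2 = 5 \<and> nreg s 3 = 5 * n + 20 \<and>
     nreg s 4 = n + 20 \<and> nreg s 5 = 2 * n + 20 \<and> nreg s 6 = 3 * n + 20 \<and> nreg s 15 = 0"

definition agree_except :: "mstate \<Rightarrow> mstate \<Rightarrow> nat set \<Rightarrow> nat set \<Rightarrow> bool" where
  "agree_except s s' NS RS \<longleftrightarrow>
     (\<forall>x. x \<notin> NS \<longrightarrow> nreg s' x = nreg s x) \<and> (\<forall>x. x \<notin> RS \<longrightarrow> rreg s' x = rreg s x)"

definition flag_array :: "mstate \<Rightarrow> nat \<Rightarrow> nat \<Rightarrow> nat set \<Rightarrow> bool" where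
  "flag_array s base n A \<longleftrightarrow> (\<forall>j<n. nreg s (base + j) = (if j \<in> A then 1 else 0))"

definition input_reg :: "job list \<Rightarrow> nat \<Rightarrow> real" where
  "input_reg js x = job_field (x mod 5) (js ! (x div 5))"

definition copy_inv :: "job list \<Rightarrow> mstate \<Rightarrow> nat \<Rightarrow> bool" where
  "copy_inv js s m \<longleftrightarrow> (\<exists>i. m = 5 * length js - i \<and> i \<le> 5 * length js \<and> pc s = 17 \<and>
     layout (length js) s \<and> nreg s 8 = i \<and> nreg s 9 = 5 * length js + 20 + i \<and>
     nreg s 12 = 5 * length js - i \<and>
     (\<forall>x<i. rreg s (5 * length js + 20 + x) = input_reg js x) \<and>
     (\<forall>x. i \<le> x \<and> x < 5 * length js \<longrightarrow> rreg s x = input_reg js x) \<and>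
     (\<forall>x\<ge>16. nreg s x = 0))"

abbreviation dp_val :: "job list \<Rightarrow> mstate \<Rightarrow> nat \<Rightarrow> real" where
  "dp_val js s j \<equiv> rreg s (5 * length js + 20 + 5 * j + 4)"

abbreviation dp_pred :: "job list \<Rightarrow> mstate \<Rightarrow> nat \<Rightarrow> nat" where
  "dp_pred js s j \<equiv> nreg s (2 * length js + 20 + j)"

definition dp_table :: "job list \<Rightarrow> nat set \<Rightarrow> mstate \<Rightarrow> bool" where
  "dp_table js P s \<longleftrightarrow>
     (\<forall>j<length js. \<forall>f<4. rreg s (5 * length js + 20 + 5 * j + f) = job_field f (js!j)) \<and>
     (\<forall>j<length js. j \<notin> P \<longrightarrow> dp_val js s j = wt (js!j)) \<and>
     dp_invariant js P (dp_val js s) (dp_pred js s) \<and>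
     flag_array s (3 * length js + 20) (length js) {}"

definition outer_state :: "job list \<Rightarrow> nat set \<Rightarrow> mstate \<Rightarrow> bool" where
  "outer_state js P s \<longleftrightarrow> layout (length js) s \<and> rreg s 5 = 0 \<and> card P + nreg s 7 = length js \<and>
     dp_table js P s \<and> running_max P (dp_val js s) (rreg s 4) (nreg s 14)"

definition outer_inv :: "job list \<Rightarrow> mstate \<Rightarrow> nat \<Rightarrow> bool" where
  "outer_inv js s m \<longleftrightarrow> pc s = 28 \<and> nreg s 7 = m \<and>
     (\<exists>P. outer_state js P s \<and> flag_array s (length js + 20) (length js) P)"

lemma dp_table_job_field:
  "dp_table js P s \<Longrightarrow> j < length js \<Longrightarrow> f < 4 \<Longrightarrow>
    rreg s (5 * length js + 20 + 5 * j + f) = job_field f (js!j)"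
  unfolding dp_table_def by blast

lemma outer_state_agree:
  assumes "outer_state js P s" "agree_except s s' NS RS" "RS \<subseteq> {0, 1, 2, 3, 6, 7}"
    "\<forall>x\<in>NS. 8 \<le> x \<and> x \<le> 13 \<or> length js + 20 \<le> x \<and> x < 2 * length js + 20"
  shows "outer_state js P s'"
proof -
  have n: "nreg s' x = nreg s x"
    if "x < 8 \<or> 13 < x" "\<not> (length js + 20 \<le> x \<and> x < 2 * length js + 20)" for x
  proof -
    have "x \<notin> NS"
    proof
      assume "x \<in> NS"
      then have "8 \<le> x \<and> x \<le> 13 \<or> length js + 20 \<le> x \<and> x < 2 * length js + 20"
        using assms(4) by blast
      then show False using that by linarith
    qed
    then show ?thesis using assms(2) unfolding agree_except_def by blast
  qed
  have r: "rreg s' x = rreg s x" if "x \<notin> {0, 1, 2, 3, 6, 7}" for x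
    using assms(2,3) that unfolding agree_except_def by blast
  have "dp_val js s' = dp_val js s" "dp_pred js s' = dp_pred js s"
    by (simp_all add: n r)
  then show ?thesis
    using assms(1) unfolding outer_state_def dp_table_def layout_def flag_array_def
    by (simp add: n r)
qed

lemma flag_array_agree:
  assumes "flag_array s base n A" "agree_except s s' NS RS" "\<forall>x\<in>NS. x < base"
  shows "flag_array s' base n A"
proof -
  have "nreg s' (base + j) = nreg s (base + j)" for j
    using assms(2,3) unfolding agree_except_def by (metis le_add1 not_le)
  then show ?thesis using assms(1) unfolding flag_array_def by simp
qed

lemma init_reaches_copy: "reaches prog (init js) (\<lambda>s. copy_inv js s (5 * length js)) 17"
proof -
  have "pc (init js) = 0" "nreg (init js) 0 = length js" "\<forall>x\<ge>1. nreg (init js) x = 0"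
    "\<forall>x<5 * length js. rreg (init js) x = input_reg js x"
    unfolding init_def input_reg_def by auto
  then show ?thesis
    by - ((rule reaches_exec, simp add: prog_simps, simp add: prog_simps)+, rule reaches_now,
      simp add: copy_inv_def layout_def)
qed

lemma copied_job_field:
  assumes "\<forall>x<5 * n. rreg s (5 * n + 20 + x) = input_reg js x" "j < n" "f < 5"
  shows "rreg s (5 * n + 20 + 5 * j + f) = job_field f (js!j)"
proof -
  have "5 * j + f < 5 * n" using assms(2,3) by linarith
  then have "rreg s (5 * n + 20 + (5 * j + f)) = input_reg js (5 * j + f)" using assms(1) by blast
  then show ?thesis using assms(3) by (simp add: input_reg_def add.assoc)
qed

lemma copy_exit:
  assumes "copy_inv js s 0"
  shows "reaches prog s (\<lambda>s'. outer_inv js s' (length js)) 5"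
proof -
  define n where "n = length js"
  have I: "pc s = 17" "layout n s" "nreg s 12 = 0"
     "\<forall>x<5 * n. rreg s (5 * n + 20 + x) = input_reg js x" "\<forall>x\<ge>16. nreg s x = 0"
    using assms unfolding copy_inv_def n_def by auto
  have "reaches prog s (\<lambda>s'. pc s' = 28 \<and> agree_except s s' {7, 14} {4, 5} \<and>
      nreg s' 7 = n \<and> nreg s' 14 = 0 \<and> rreg s' 4 = 0 \<and> rreg s' 5 = 0) 5"
    using I(1-3) unfolding layout_def
    by - ((rule reaches_exec, simp add: prog_simps, simp add: prog_simps)+, rule reaches_now,
      simp add: agree_except_def)
  moreover have "outer_inv js s' n" if s': "pc s' = 28" "agree_except s s' {7, 14} {4, 5}"
    "nreg s' 7 = n" "nreg s' 14 = 0" "rreg s' 4 = 0" "rreg s' 5 = 0" for s'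
  proof -
    have nr: "nreg s' x = nreg s x" if "x \<notin> {7, 14}" for x
      using s'(2) that unfolding agree_except_def by blast
    have rr: "rreg s' x = rreg s x" if "x \<notin> {4, 5}" for x
      using s'(2) that unfolding agree_except_def by blast
    have "\<forall>x<5 * n. rreg s' (5 * n + 20 + x) = input_reg js x" using I(4) rr by simp
    then have fld: "rreg s' (5 * n + 20 + 5 * j + f) = job_field f (js!j)" if "j < n" "f < 5" for j f
      using copied_job_field that by blast
    have "dp_val js s' j = wt (js!j)" if "j < n" for j
      using fld[OF that, of 4] by (simp add: job_field_def n_def)
    then have "dp_table js {} s'"
      using fld I(5) nr unfolding dp_table_def flag_array_def n_def
      by (simp add: dp_invariant_empty)
    moreover have "layout n s'" using I(2) nr unfolding layout_def by simp
    moreover have "flag_array s' (n + 20) n {}" using I(5) nr unfolding flag_array_def by simp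
    ultimately show ?thesis
      using s' unfolding outer_inv_def outer_state_def n_def
      by (intro conjI exI[of _ "{}"]) (simp_all add: running_max_empty)
  qed
  ultimately show ?thesis unfolding n_def by (blast intro: reaches_mono)
qed

lemma copy_body:
  assumes "copy_inv js s (Suc m)"
  shows "reaches prog s (\<lambda>s'. copy_inv js s' m) 7"
proof -
  define n where "n = length js"
  obtain i where I: "Suc m = 5 * n - i" "i \<le> 5 * n" "pc s = 17" "layout n s"
     "nreg s 8 = i" "nreg s 9 = 5 * n + 20 + i" "nreg s 12 = 5 * n - i"
     "\<forall>x<i. rreg s (5 * n + 20 + x) = input_reg js x"
     "\<forall>x. i \<le> x \<and> x < 5 * n \<longrightarrow> rreg s x = input_reg js x"
     "\<forall>x\<ge>16. nreg s x = 0"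
    using assms unfolding copy_inv_def n_def by blast
  have "i < 5 * n" using I(1) by linarith
  then show ?thesis
    using I unfolding layout_def
    by - ((rule reaches_exec, simp add: prog_simps, simp add: prog_simps)+, rule reaches_now,
      unfold copy_inv_def, rule exI[of _ "Suc i"], simp add: layout_def n_def[symmetric] less_Suc_eq)
qed

lemma copy_loop: "copy_inv js s m \<Longrightarrow> reaches prog s (\<lambda>s'. outer_inv js s' (length js)) (m * 7 + 5)"
  by (rule reaches_countdown[where I = "copy_inv js", OF copy_exit copy_body])

definition select_state :: "job list \<Rightarrow> nat set \<Rightarrow> mstate \<Rightarrow> nat \<Rightarrow> bool" where
  "select_state js P s j \<longleftrightarrow> outer_state js P s \<and> flag_array s (length js + 20) (length js) P \<and>
     0 < nreg s 7 \<and> j \<le> length js \<and> nreg s 8 = j \<and> nreg s 9 = 5 * length js + 20 + 5 * j \<and>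
     next_unprocessed_upto js P j (nreg s 10) \<and>
     (nreg s 10 \<noteq> 0 \<longrightarrow> nreg s 11 = 5 * length js + 20 + 5 * (nreg s 10 - 1) \<and>
        rreg s 2 = ra (js!(nreg s 10 - 1)))"

definition select_inv :: "job list \<Rightarrow> nat set \<Rightarrow> mstate \<Rightarrow> nat \<Rightarrow> bool" where
  "select_inv js P s m \<longleftrightarrow> pc s = 32 \<and> (\<exists>j. m = length js - j \<and> select_state js P s j)"

lemma select_state_agree:
  assumes "select_state js P s j" "agree_except s s' {12} {}"
  shows "select_state js P s' j"
proof -
  have "outer_state js P s'" "flag_array s' (length js + 20) (length js) P"
    using assms outer_state_agree[OF _ assms(2)] flag_array_agree[OF _ assms(2)]
    unfolding select_state_def by auto
  moreover have "nreg s' x = nreg s x" if "x \<noteq> 12" for x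
    using assms(2) that unfolding agree_except_def by auto
  moreover have "rreg s' = rreg s" using assms(2) unfolding agree_except_def by auto
  ultimately show ?thesis using assms(1) unfolding select_state_def by simp
qed

lemma select_state_advance:
  assumes S: "select_state js P s j" and j: "j < length js"
    and F: "agree_except s s' {8, 9, 10, 11, 12} {0, 2}"
    and p: "nreg s' 8 = Suc j" "nreg s' 9 = 5 * length js + 20 + 5 * j + 5"
    and c: "if j \<notin> P \<and> (nreg s 10 = 0 \<or> \<not> rreg s 2 \<le> ra (js!j))
            then nreg s' 10 = Suc j \<and> nreg s' 11 = 5 * length js + 20 + 5 * j \<and> rreg s' 2 = ra (js!j)
            else nreg s' 10 = nreg s 10 \<and> nreg s' 11 = nreg s 11 \<and> rreg s' 2 = rreg s 2"
  shows "select_state js P s' (Suc j)"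
proof -
  have O: "outer_state js P s'" "flag_array s' (length js + 20) (length js) P"
    using S outer_state_agree[OF _ F] flag_array_agree[OF _ F] unfolding select_state_def by auto
  have n7: "nreg s' 7 = nreg s 7" using F unfolding agree_except_def by auto
  have N: "next_unprocessed_upto js P j (nreg s 10)"
    "nreg s 10 \<noteq> 0 \<Longrightarrow> rreg s 2 = ra (js!(nreg s 10 - 1))"
    using S unfolding select_state_def by blast+
  have "(nreg s 10 = 0 \<or> \<not> rreg s 2 \<le> ra (js!j)) \<longleftrightarrow>
      (nreg s 10 = 0 \<or> \<not> ra (js!(nreg s 10 - 1)) \<le> ra (js!j))"
    using N(2) by auto
  then have "next_unprocessed_upto js P (Suc j) (nreg s' 10)"
    using next_unprocessed_upto_Suc[OF N(1)] c by (simp split: if_splits)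
  then show ?thesis
    using O n7 S j p c unfolding select_state_def by (auto split: if_splits)
qed

lemma select_exit:
  assumes "select_inv js P s 0"
  shows "reaches prog s (\<lambda>s'. pc s' = 48 \<and> select_state js P s' (length js)) 2"
proof -
  obtain j where S: "select_state js P s j" "pc s = 32" "j = length js"
    using assms unfolding select_inv_def select_state_def by fastforce
  have R: "layout (length js) s" "nreg s 8 = length js"
    using S unfolding select_state_def outer_state_def by auto
  have "reaches prog s (\<lambda>s'. pc s' = 48 \<and> agree_except s s' {12} {}) 2"
    using S(2) R unfolding layout_def
    by - ((rule reaches_exec, simp add: prog_simps, simp add: prog_simps)+, rule reaches_now,
      simp add: agree_except_def)
  then show ?thesis using select_state_agree S(1,3) by (blast intro: reaches_mono)
qed

lemma select_body:
  assumes "select_inv js P s (Suc m)"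
  shows "reaches prog s (\<lambda>s'. select_inv js P s' m) 15"
proof -
  obtain j where j: "Suc m = length js - j" and S: "select_state js P s j" and pc: "pc s = 32"
    using assms unfolding select_inv_def by blast
  have jl: "j < length js" using j by linarith
  have R: "layout (length js) s" "nreg s 8 = j" "nreg s 9 = 5 * length js + 20 + 5 * j" "rreg s 5 = 0"
    using S unfolding select_state_def outer_state_def by blast+
  have flag: "nreg s (length js + 20 + j) = (if j \<in> P then 1 else 0)"
    using S jl unfolding select_state_def flag_array_def by blast
  have aj: "rreg s (5 * length js + 20 + 5 * j + 1) = ra (js!j)"
    using dp_table_job_field[of js P s j 1] S jl
    unfolding select_state_def outer_state_def by (simp add: job_field_def)
  define POST where "POST s' \<longleftrightarrow> pc s' = 32 \<and> nreg s' 8 = Suc j \<and>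
    nreg s' 9 = 5 * length js + 20 + 5 * j + 5 \<and> agree_except s s' {8, 9, 10, 11, 12} {0, 2} \<and>
    (if j \<notin> P \<and> (nreg s 10 = 0 \<or> \<not> rreg s 2 \<le> ra (js!j))
     then nreg s' 10 = Suc j \<and> nreg s' 11 = 5 * length js + 20 + 5 * j \<and> rreg s' 2 = ra (js!j)
     else nreg s' 10 = nreg s 10 \<and> nreg s' 11 = nreg s 11 \<and> rreg s' 2 = rreg s 2)" for s'
  consider "j \<in> P" | "j \<notin> P" "nreg s 10 = 0" | "j \<notin> P" "nreg s 10 \<noteq> 0" "rreg s 2 \<le> ra (js!j)"
    | "j \<notin> P" "nreg s 10 \<noteq> 0" "\<not> rreg s 2 \<le> ra (js!j)"
    by blast
  then have "reaches prog s POST 15"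
    using pc R jl flag aj unfolding layout_def
    \<comment> \<open>stepping stops as soon as POST holds, so one script covers paths of different lengths\<close>
    by cases
      ((rule reaches_now, (simp add: POST_def agree_except_def; fail))
        | (rule reaches_exec, simp add: prog_simps, simp add: prog_simps))+
  moreover have "select_inv js P s' m" if "POST s'" for s'
  proof -
    have "select_state js P s' (Suc j)"
      using that select_state_advance[OF S jl, of s'] unfolding POST_def by blast
    then show ?thesis using that j unfolding select_inv_def POST_def by (auto intro!: exI[of _ "Suc j"])
  qed
  ultimately show ?thesis by (blast intro: reaches_mono)
qed

lemma select_loop:
  "select_inv js P s m \<Longrightarrow>
    reaches prog s (\<lambda>s'. pc s' = 48 \<and> select_state js P s' (length js)) (m * 15 + 2)"
  by (rule reaches_countdown[where I = "select_inv js P", OF select_exit select_body])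

definition scan_state :: "job list \<Rightarrow> nat set \<Rightarrow> nat \<Rightarrow> mstate \<Rightarrow> nat \<Rightarrow> bool" where
  "scan_state js P k s j \<longleftrightarrow> outer_state js P s \<and>
     flag_array s (length js + 20) (length js) (insert k P) \<and>
     0 < nreg s 7 \<and> next_unprocessed_upto js P (length js) (Suc k) \<and>
     nreg s 10 = k \<and> nreg s 11 = 5 * length js + 20 + 5 * k \<and>
     rreg s 6 = ra (js!k) \<and> rreg s 7 = lft (js!k) \<and>
     j \<le> length js \<and> nreg s 8 = j \<and> nreg s 9 = 5 * length js + 20 + 5 * j \<and>
     running_max {i. i < j \<and> precedes js i k} (dp_val js s) (rreg s 3) (nreg s 13)"

definition scan_inv :: "job list \<Rightarrow> nat set \<Rightarrow> nat \<Rightarrow> mstate \<Rightarrow> nat \<Rightarrow> bool" where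
  "scan_inv js P k s m \<longleftrightarrow> pc s = 58 \<and> (\<exists>j. m = length js - j \<and> scan_state js P k s j)"

lemma select_done_reaches_scan:
  assumes S: "select_state js P s (length js)" and pc: "pc s = 48"
  shows "reaches prog s (\<lambda>s'. \<exists>k. scan_inv js P k s' (length js)) 10"
proof -
  have O: "outer_state js P s" "flag_array s (length js + 20) (length js) P" "0 < nreg s 7"
    "next_unprocessed_upto js P (length js) (nreg s 10)"
    "nreg s 10 \<noteq> 0 \<Longrightarrow> nreg s 11 = 5 * length js + 20 + 5 * (nreg s 10 - 1)"
    using S unfolding select_state_def by blast+
  have R: "layout (length js) s" "card P + nreg s 7 = length js" "dp_table js P s"
    using O(1) unfolding outer_state_def by blast+
  have "P \<subseteq> {0..<length js}" using R(3) unfolding dp_table_def dp_invariant_def by blast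
  then have "nreg s 10 \<noteq> 0" using next_unprocessed_upto_nonzero O(3,4) R(2) by simp
  then obtain k where k: "nreg s 10 = Suc k" using not0_implies_Suc by blast
  have K: "next_unprocessed_upto js P (length js) (Suc k)" "k < length js"
    "nreg s 11 = 5 * length js + 20 + 5 * k"
    using O(4,5) k unfolding next_unprocessed_upto_def by auto
  have job_k: "rreg s (5 * length js + 20 + 5 * k + 1) = ra (js!k)"
    "rreg s (5 * length js + 20 + 5 * k) = lft (js!k)"
    using dp_table_job_field[OF R(3) K(2), of 1] dp_table_job_field[OF R(3) K(2), of 0]
    by (simp_all add: job_field_def)
  have "reaches prog s (\<lambda>s'. pc s' = 58 \<and>
      agree_except s s' {8, 9, 10, 12, 13, length js + 20 + k} {3, 6, 7} \<and>
      nreg s' (length js + 20 + k) = 1 \<and> nreg s' 10 = k \<and> nreg s' 8 = 0 \<and>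
      nreg s' 9 = 5 * length js + 20 \<and> nreg s' 13 = 0 \<and> rreg s' 3 = 0 \<and>
      rreg s' 6 = ra (js!k) \<and> rreg s' 7 = lft (js!k)) 10"
    using pc R(1) k K(3) job_k unfolding layout_def
    by - ((rule reaches_exec, simp add: prog_simps, simp add: prog_simps)+, rule reaches_now,
      simp add: agree_except_def)
  moreover have "scan_inv js P k s' (length js)" if s': "pc s' = 58"
    "agree_except s s' {8, 9, 10, 12, 13, length js + 20 + k} {3, 6, 7}"
    "nreg s' (length js + 20 + k) = 1" "nreg s' 10 = k" "nreg s' 8 = 0"
    "nreg s' 9 = 5 * length js + 20" "nreg s' 13 = 0" "rreg s' 3 = 0"
    "rreg s' 6 = ra (js!k)" "rreg s' 7 = lft (js!k)" for s'
  proof -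
    have "outer_state js P s'"
      by (rule outer_state_agree[OF O(1) s'(2)]) (use K(2) in auto)
    moreover have "flag_array s' (length js + 20) (length js) (insert k P)"
    proof -
      have "nreg s' (length js + 20 + j) = nreg s (length js + 20 + j)" if "j \<noteq> k" for j
        using s'(2) that unfolding agree_except_def by auto
      then show ?thesis
        using O(2) s'(3) unfolding flag_array_def by (metis insert_iff)
    qed
    moreover have "nreg s' 7 = nreg s 7" "nreg s' 11 = nreg s 11"
      using s'(2) K(2) unfolding agree_except_def by auto
    ultimately have "scan_state js P k s' 0"
      using s' O(3) K unfolding scan_state_def by (simp add: running_max_empty)
    then show ?thesis using s'(1) unfolding scan_inv_def by force
  qed
  ultimately show ?thesis by (blast intro: reaches_mono)
qed

lemma scan_state_agree:
  assumes "scan_state js P k s j" "agree_except s s' {12} {}"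
  shows "scan_state js P k s' j"
proof -
  have "outer_state js P s'" "flag_array s' (length js + 20) (length js) (insert k P)"
    using assms outer_state_agree[OF _ assms(2)] flag_array_agree[OF _ assms(2)]
    unfolding scan_state_def by auto
  moreover have "nreg s' x = nreg s x" if "x \<noteq> 12" for x
    using assms(2) that unfolding agree_except_def by auto
  moreover have "rreg s' = rreg s" using assms(2) unfolding agree_except_def by auto
  ultimately show ?thesis using assms(1) unfolding scan_state_def by simp
qed

lemma scan_state_advance:
  assumes S: "scan_state js P k s j" and j: "j < length js"
    and F: "agree_except s s' {8, 9, 12, 13} {0, 3}"
    and p: "nreg s' 8 = Suc j" "nreg s' 9 = 5 * length js + 20 + 5 * j + 5"
    and c: "if precedes js j k \<and> \<not> dp_val js s j \<le> rreg s 3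
            then nreg s' 13 = Suc j \<and> rreg s' 3 = dp_val js s j
            else nreg s' 13 = nreg s 13 \<and> rreg s' 3 = rreg s 3"
  shows "scan_state js P k s' (Suc j)"
proof -
  have O: "outer_state js P s'" "flag_array s' (length js + 20) (length js) (insert k P)"
    using S outer_state_agree[OF _ F] flag_array_agree[OF _ F] unfolding scan_state_def by auto
  have nr: "nreg s' x = nreg s x" if "x \<notin> {8, 9, 12, 13}" for x
    using F that unfolding agree_except_def by blast
  have rr: "rreg s' x = rreg s x" if "x \<notin> {0, 3}" for x
    using F that unfolding agree_except_def by blast
  have val: "dp_val js s' = dp_val js s" by (simp add: rr)
  have M: "running_max {i. i < j \<and> precedes js i k} (dp_val js s) (rreg s 3) (nreg s 13)"
    using S unfolding scan_state_def by blast
  have "running_max {i. i < Suc j \<and> precedes js i k} (dp_val js s) (rreg s' 3) (nreg s' 13)"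
  proof (cases "precedes js j k")
    case True
    then have "{i. i < Suc j \<and> precedes js i k} = insert j {i. i < j \<and> precedes js i k}"
      by auto
    then show ?thesis using running_max_insert[OF M, of "dp_val js s" j] c True
      by (simp split: if_splits)
  next
    case False
    then have "{i. i < Suc j \<and> precedes js i k} = {i. i < j \<and> precedes js i k}"
      using less_Suc_eq by auto
    then show ?thesis using M c False by simp
  qed
  then show ?thesis
    using O S j p val unfolding scan_state_def by (simp add: nr rr)
qed

lemma scan_exit:
  assumes "scan_inv js P k s 0"
  shows "reaches prog s (\<lambda>s'. pc s' = 79 \<and> scan_state js P k s' (length js)) 2"
proof -
  obtain j where S: "scan_state js P k s j" "pc s = 58" "j = length js"
    using assms unfolding scan_inv_def scan_state_def by fastforce
  have R: "layout (length js) s" "nreg s 8 = length js"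
    using S unfolding scan_state_def outer_state_def by auto
  have "reaches prog s (\<lambda>s'. pc s' = 79 \<and> agree_except s s' {12} {}) 2"
    using S(2) R unfolding layout_def
    by - ((rule reaches_exec, simp add: prog_simps, simp add: prog_simps)+, rule reaches_now,
      simp add: agree_except_def)
  then show ?thesis using scan_state_agree S(1,3) by (blast intro: reaches_mono)
qed

lemma scan_body:
  assumes "scan_inv js P k s (Suc m)"
  shows "reaches prog s (\<lambda>s'. scan_inv js P k s' m) 19"
proof -
  obtain j where j: "Suc m = length js - j" and S: "scan_state js P k s j" and pc: "pc s = 58"
    using assms unfolding scan_inv_def by blast
  have jl: "j < length js" using j by linarith
  have R: "layout (length js) s" "nreg s 8 = j" "nreg s 9 = 5 * length js + 20 + 5 * j"
    "rreg s 5 = 0" "rreg s 6 = ra (js!k)" "rreg s 7 = lft (js!k)" "dp_table js P s"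
    using S unfolding scan_state_def outer_state_def by blast+
  have job_j: "rreg s (5 * length js + 20 + 5 * j + 3) = rgt (js!j)"
    "rreg s (5 * length js + 20 + 5 * j + 2) = rb (js!j)"
    using dp_table_job_field[OF R(7) jl, of 3] dp_table_job_field[OF R(7) jl, of 2]
    by (simp_all add: job_field_def)
  define POST where "POST s' \<longleftrightarrow> pc s' = 58 \<and> nreg s' 8 = Suc j \<and>
    nreg s' 9 = 5 * length js + 20 + 5 * j + 5 \<and> agree_except s s' {8, 9, 12, 13} {0, 3} \<and>
    (if precedes js j k \<and> \<not> dp_val js s j \<le> rreg s 3
     then nreg s' 13 = Suc j \<and> rreg s' 3 = dp_val js s j
     else nreg s' 13 = nreg s 13 \<and> rreg s' 3 = rreg s 3)" for s'
  consider "\<not> rgt (js!j) \<le> ra (js!k)" | "rgt (js!j) \<le> ra (js!k)" "\<not> rb (js!j) \<le> lft (js!k)"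
    | "precedes js j k" "dp_val js s j \<le> rreg s 3" | "precedes js j k" "\<not> dp_val js s j \<le> rreg s 3"
    unfolding precedes_def by blast
  then have "reaches prog s POST 19"
    using pc R jl job_j unfolding layout_def precedes_def
    by cases
      ((rule reaches_now, (simp add: POST_def agree_except_def precedes_def; fail))
        | (rule reaches_exec, simp add: prog_simps, simp add: prog_simps))+
  moreover have "scan_inv js P k s' m" if "POST s'" for s'
  proof -
    have "scan_state js P k s' (Suc j)"
      using that scan_state_advance[OF S jl, of s'] unfolding POST_def by blast
    then show ?thesis using that j unfolding scan_inv_def POST_def by (auto intro!: exI[of _ "Suc j"])
  qed
  ultimately show ?thesis by (blast intro: reaches_mono)
qed

lemma scan_loop:
  "scan_inv js P k s m \<Longrightarrow>
    reaches prog s (\<lambda>s'. pc s' = 79 \<and> scan_state js P k s' (length js)) (m * 19 + 2)"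
  by (rule reaches_countdown[where I = "scan_inv js P k", OF scan_exit scan_body])

lemma dp_table_update:
  assumes valid: "valid_instance js" and D: "dp_table js P s"
    and k: "next_unprocessed_upto js P (length js) (Suc k)"
    and M: "running_max {i. i < length js \<and> precedes js i k} (dp_val js s) M p"
    and F: "agree_except s s' {7, 12, 14, 2 * length js + 20 + k}
      {0, 4, 5 * length js + 20 + 5 * k + 4}"
    and upd: "dp_val js s' k = wt (js!k) + M" "dp_pred js s' k = p"
  shows "dp_table js (insert k P) s'" "\<And>j. j \<noteq> k \<Longrightarrow> dp_val js s' j = dp_val js s j"
proof -
  let ?n = "length js"
  have kn: "k < ?n" using k unfolding next_unprocessed_upto_def by auto
  have nr: "nreg s' x = nreg s x" if "x \<notin> {7, 12, 14, 2 * ?n + 20 + k}" for x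
    using F that unfolding agree_except_def by blast
  have rr: "rreg s' x = rreg s x" if "x \<notin> {0, 4, 5 * ?n + 20 + 5 * k + 4}" for x
    using F that unfolding agree_except_def by blast
  have fields: "rreg s' (5 * ?n + 20 + 5 * j + f) = rreg s (5 * ?n + 20 + 5 * j + f)" if "f < 4" for j f
  proof -
    have "5 * j + f \<noteq> 5 * k + 4" using that by presburger
    then show ?thesis by (intro rr) auto
  qed
  have val: "dp_val js s' = (dp_val js s)(k := wt (js!k) + M)"
  proof
    show "dp_val js s' j = ((dp_val js s)(k := wt (js!k) + M)) j" for j
      using upd(1) by (cases "j = k") (simp_all add: rr)
  qed
  have pred: "dp_pred js s' = (dp_pred js s)(k := p)"
  proof
    show "dp_pred js s' j = ((dp_pred js s)(k := p)) j" for j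
      using upd(2) by (cases "j = k") (simp_all add: nr)
  qed
  show val_other: "dp_val js s' j = dp_val js s j" if "j \<noteq> k" for j
    using fun_cong[OF val, of j] that by simp
  have "dp_invariant js (insert k P) (dp_val js s') (dp_pred js s')"
    unfolding val pred
    by (rule dp_invariant_insert[OF valid _ k M]) (use D in \<open>simp add: dp_table_def\<close>)
  then show "dp_table js (insert k P) s'"
    using D kn fields val_other unfolding dp_table_def flag_array_def by (simp add: nr)
qed

lemma outer_state_update:
  assumes valid: "valid_instance js" and S: "scan_state js P k s (length js)"
    and F: "agree_except s s' {7, 12, 14, 2 * length js + 20 + k}
      {0, 4, 5 * length js + 20 + 5 * k + 4}"
    and upd: "dp_val js s' k = wt (js!k) + rreg s 3" "dp_pred js s' k = nreg s 13"
      "nreg s' 7 = nreg s 7 - 1"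
    and best: "if dp_val js s' k \<le> rreg s 4 then nreg s' 14 = nreg s 14 \<and> rreg s' 4 = rreg s 4
      else nreg s' 14 = Suc k \<and> rreg s' 4 = dp_val js s' k"
  shows "outer_state js (insert k P) s'"
    "flag_array s' (length js + 20) (length js) (insert k P)"
proof -
  let ?n = "length js"
  have O: "layout ?n s" "rreg s 5 = 0" "card P + nreg s 7 = ?n" "dp_table js P s"
    "running_max P (dp_val js s) (rreg s 4) (nreg s 14)"
    using S unfolding scan_state_def outer_state_def by blast+
  have S': "flag_array s (?n + 20) ?n (insert k P)" "0 < nreg s 7"
    "next_unprocessed_upto js P ?n (Suc k)"
    "running_max {i. i < ?n \<and> precedes js i k} (dp_val js s) (rreg s 3) (nreg s 13)"
    using S unfolding scan_state_def by auto
  have k: "k < ?n" "k \<notin> P" using S'(3) unfolding next_unprocessed_upto_def by auto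
  have nr: "nreg s' x = nreg s x" if "x \<notin> {7, 12, 14, 2 * ?n + 20 + k}" for x
    using F that unfolding agree_except_def by blast
  note D = dp_table_update[OF valid O(4) S'(3,4) F upd(1,2)]
  have "\<forall>i\<in>P. dp_val js s' i = dp_val js s i" using D(2) k(2) by metis
  from running_max_insert[OF O(5) this, of k]
  have "running_max (insert k P) (dp_val js s') (rreg s' 4) (nreg s' 14)"
    using best by (simp split: if_splits)
  moreover have "layout ?n s'" "rreg s' 5 = 0"
    using O(1,2) F unfolding layout_def agree_except_def by (simp_all add: nr)
  moreover have "card (insert k P) + nreg s' 7 = ?n"
  proof -
    have "finite P"
      using O(4) finite_subset[of P "{0..<?n}"] unfolding dp_table_def dp_invariant_def by auto
    then show ?thesis using O(3) S'(2) k(2) upd(3) by simp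
  qed
  ultimately show "outer_state js (insert k P) s'" using D(1) unfolding outer_state_def by blast
  show "flag_array s' (?n + 20) ?n (insert k P)"
    using S'(1) k(1) unfolding flag_array_def by (simp add: nr)
qed

lemma scan_done_reaches_outer:
  assumes valid: "valid_instance js" and S: "scan_state js P k s (length js)" and pc: "pc s = 79"
  shows "reaches prog s (\<lambda>s'. outer_inv js s' (nreg s 7 - 1)) 12"
proof -
  have R: "layout (length js) s" "nreg s 10 = k" "nreg s 11 = 5 * length js + 20 + 5 * k"
    "rreg s 5 = 0" "dp_table js P s" "next_unprocessed_upto js P (length js) (Suc k)"
    using S unfolding scan_state_def outer_state_def by blast+
  have "dp_val js s k = wt (js!k)"
    using R(5,6) unfolding dp_table_def next_unprocessed_upto_def by auto
  define POST where "POST s' \<longleftrightarrow> pc s' = 28 \<and> nreg s' 7 = nreg s 7 - 1 \<and>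
    dp_val js s' k = wt (js!k) + rreg s 3 \<and> dp_pred js s' k = nreg s 13 \<and>
    agree_except s s' {7, 12, 14, 2 * length js + 20 + k} {0, 4, 5 * length js + 20 + 5 * k + 4} \<and>
    (if dp_val js s' k \<le> rreg s 4 then nreg s' 14 = nreg s 14 \<and> rreg s' 4 = rreg s 4
     else nreg s' 14 = Suc k \<and> rreg s' 4 = dp_val js s' k)" for s'
  have "reaches prog s POST 12"
    using pc R \<open>dp_val js s k = wt (js!k)\<close> unfolding layout_def
    by (cases "wt (js!k) + rreg s 3 \<le> rreg s 4")
      ((rule reaches_now, (simp add: POST_def agree_except_def; fail))
        | (rule reaches_exec, simp add: prog_simps, simp add: prog_simps))+
  moreover have "outer_inv js s' (nreg s 7 - 1)" if "POST s'" for s'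
    using that outer_state_update[OF valid S, of s'] unfolding POST_def outer_inv_def by blast
  ultimately show ?thesis by (blast intro: reaches_mono)
qed

definition trace_state :: "job list \<Rightarrow> real \<Rightarrow> mstate \<Rightarrow> nat \<Rightarrow> bool" where
  "trace_state js G s m \<longleftrightarrow> pc s = 92 \<and> layout (length js) s \<and>
     (\<forall>j<length js. pred_link js (dp_val js s) (dp_pred js s j) j) \<and>
     (\<forall>S. feasible js S \<longrightarrow> weight js S \<le> G) \<and>
     (\<exists>V. m = length js - card V \<and> trace_inv js (dp_val js s) G V (nreg s 10) \<and>
        flag_array s (3 * length js + 20) (length js) V)"

lemma outer_exit:
  assumes valid: "valid_instance js" and O: "outer_inv js s 0"
  shows "reaches prog s (\<lambda>s'. \<exists>G. trace_state js G s' (length js)) 2"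
proof -
  obtain P where pc: "pc s = 28" "nreg s 7 = 0" and P: "outer_state js P s"
    using O unfolding outer_inv_def by blast
  have R: "layout (length js) s" "card P = length js" "dp_table js P s"
    "running_max P (dp_val js s) (rreg s 4) (nreg s 14)"
    using P pc(2) unfolding outer_state_def by auto
  have "P \<subseteq> {0..<length js}" using R(3) unfolding dp_table_def dp_invariant_def by blast
  then have all: "P = {0..<length js}" using R(2) by (simp add: card_subset_eq)
  have dp: "best_ending_at js j (dp_val js s j)" "pred_link js (dp_val js s) (dp_pred js s j) j"
    if "j < length js" for j
    using R(3) that unfolding dp_table_def dp_invariant_def all by auto
  have G: "0 \<le> rreg s 4" "\<And>j. j < length js \<Longrightarrow> dp_val js s j \<le> rreg s 4"
    "trace_inv js (dp_val js s) (rreg s 4) {} (nreg s 14)"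
    using R(4) unfolding running_max_def trace_inv_start all by auto
  have "reaches prog s (\<lambda>s'. pc s' = 92 \<and> agree_except s s' {10} {} \<and> nreg s' 10 = nreg s 14) 2"
    using pc R(1) unfolding layout_def
    by - ((rule reaches_exec, simp add: prog_simps, simp add: prog_simps)+, rule reaches_now,
      simp add: agree_except_def)
  moreover have "trace_state js (rreg s 4) s' (length js)"
    if s': "pc s' = 92" "agree_except s s' {10} {}" "nreg s' 10 = nreg s 14" for s'
  proof -
    have nr: "nreg s' x = nreg s x" if "x \<noteq> 10" for x
      using s'(2) that unfolding agree_except_def by blast
    have rr: "rreg s' = rreg s" using s'(2) unfolding agree_except_def by auto
    have "weight js S \<le> rreg s 4" if "feasible js S" for S
      by (rule feasible_weight_le[where val = "dp_val js s", OF valid dp(1) G(2,1) that])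
    moreover have "flag_array s' (3 * length js + 20) (length js) {}"
      using R(3) unfolding dp_table_def flag_array_def by (simp add: nr)
    ultimately show ?thesis
      using s' R(1) dp(2) G(3) unfolding trace_state_def layout_def
      by (simp add: nr rr, intro exI[of _ "{}"], simp)
  qed
  ultimately show ?thesis by (blast intro: reaches_mono)
qed

lemma outer_enter_select:
  assumes "outer_inv js s (Suc m)"
  obtains P where "card P + Suc m = length js" "reaches prog s (\<lambda>s'. select_inv js P s' (length js)) 4"
proof -
  obtain P where pc: "pc s = 28" "nreg s 7 = Suc m" and P: "outer_state js P s"
    "flag_array s (length js + 20) (length js) P"
    using assms unfolding outer_inv_def by blast
  have R: "layout (length js) s" "card P + Suc m = length js"
    using P(1) pc(2) unfolding outer_state_def by auto
  have "reaches prog s (\<lambda>s'. pc s' = 32 \<and> agree_except s s' {8, 9, 10} {} \<and> nreg s' 8 = 0 \<and>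
      nreg s' 9 = 5 * length js + 20 \<and> nreg s' 10 = 0) 4"
    using pc R(1) unfolding layout_def
    by - ((rule reaches_exec, simp add: prog_simps, simp add: prog_simps)+, rule reaches_now,
      simp add: agree_except_def)
  moreover have "select_inv js P s' (length js)"
    if s': "pc s' = 32" "agree_except s s' {8, 9, 10} {}" "nreg s' 8 = 0"
      "nreg s' 9 = 5 * length js + 20" "nreg s' 10 = 0" for s'
  proof -
    have "outer_state js P s'" "flag_array s' (length js + 20) (length js) P"
      using outer_state_agree[OF P(1) s'(2)] flag_array_agree[OF P(2) s'(2)] by auto
    moreover have "nreg s' 7 = Suc m" using s'(2) pc(2) unfolding agree_except_def by auto
    ultimately have "select_state js P s' 0"
      using s' unfolding select_state_def by (simp add: next_unprocessed_upto_0)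
    then show ?thesis using s'(1) unfolding select_inv_def by force
  qed
  ultimately show ?thesis using that R(2) by (blast intro: reaches_mono)
qed

lemma outer_body:
  assumes valid: "valid_instance js" and O: "outer_inv js s (Suc m)"
  shows "reaches prog s (\<lambda>s'. outer_inv js s' m) (length js * 34 + 30)"
proof -
  obtain P where P: "card P + Suc m = length js"
    "reaches prog s (\<lambda>s'. select_inv js P s' (length js)) 4"
    using outer_enter_select[OF O] by blast
  from P(2) have "reaches prog s (\<lambda>s'. pc s' = 48 \<and> select_state js P s' (length js))
      (4 + (length js * 15 + 2))"
    by (rule reaches_trans) (rule select_loop)
  then have "reaches prog s (\<lambda>s'. \<exists>k. scan_inv js P k s' (length js)) (4 + (length js * 15 + 2) + 10)"
    by (rule reaches_trans) (blast intro: select_done_reaches_scan)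
  then have "reaches prog s (\<lambda>s'. \<exists>k. pc s' = 79 \<and> scan_state js P k s' (length js))
      (4 + (length js * 15 + 2) + 10 + (length js * 19 + 2))"
    by (rule reaches_trans) (blast intro: reaches_mono scan_loop)
  then have "reaches prog s (\<lambda>s'. outer_inv js s' m)
      (4 + (length js * 15 + 2) + 10 + (length js * 19 + 2) + 12)"
  proof (rule reaches_trans)
    fix s' assume "\<exists>k. pc s' = 79 \<and> scan_state js P k s' (length js)"
    then obtain k where k: "pc s' = 79" "scan_state js P k s' (length js)" by blast
    then have "nreg s' 7 = Suc m" using P(1) unfolding scan_state_def outer_state_def by simp
    then show "reaches prog s' (\<lambda>s''. outer_inv js s'' m) 12"
      using scan_done_reaches_outer[OF valid k(2,1)] by simp
  qed
  then show ?thesis by (rule reaches_mono) simp_all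
qed

lemma outer_loop:
  "valid_instance js \<Longrightarrow> outer_inv js s m \<Longrightarrow>
    reaches prog s (\<lambda>s'. \<exists>G. trace_state js G s' (length js)) (m * (length js * 34 + 30) + 2)"
  by (rule reaches_countdown[where I = "outer_inv js", OF outer_exit outer_body])

definition write_inv :: "job list \<Rightarrow> nat set \<Rightarrow> mstate \<Rightarrow> nat \<Rightarrow> bool" where
  "write_inv js V s m \<longleftrightarrow> pc s = 100 \<and> nreg s 8 = m \<and> m \<le> length js \<and>
     nreg s 0 = length js \<and> nreg s 1 = 1 \<and> nreg s 6 = 3 * length js + 20 \<and> nreg s 15 = 0 \<and>
     flag_array s (3 * length js + 20) (length js) V \<and>
     (\<forall>x. m < x \<and> x \<le> length js \<and> 15 < x \<longrightarrow> nreg s x = (if x - 1 \<in> V then 1 else 0)) \<and>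
     optimal js V"

lemma trace_exit:
  assumes "trace_state js G s m" "nreg s 10 = 0"
  shows "reaches prog s (\<lambda>s'. \<exists>V. write_inv js V s' (length js)) 2"
proof -
  obtain V where R: "pc s = 92" "layout (length js) s" "\<forall>S. feasible js S \<longrightarrow> weight js S \<le> G"
    "trace_inv js (dp_val js s) G V 0" "flag_array s (3 * length js + 20) (length js) V"
    using assms unfolding trace_state_def by auto
  have "reaches prog s (\<lambda>s'. pc s' = 100 \<and> agree_except s s' {8} {} \<and> nreg s' 8 = length js) 2"
    using R(1,2) assms(2) unfolding layout_def
    by - ((rule reaches_exec, simp add: prog_simps, simp add: prog_simps)+, rule reaches_now,
      simp add: agree_except_def)
  moreover have "write_inv js V s' (length js)"
    if s': "pc s' = 100" "agree_except s s' {8} {}" "nreg s' 8 = length js" for s'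
  proof -
    have nr: "nreg s' x = nreg s x" if "x \<noteq> 8" for x
      using s'(2) that unfolding agree_except_def by blast
    have "optimal js V" using R(3,4) unfolding trace_inv_def optimal_def by simp
    then show ?thesis
      using s' R(2,5) unfolding write_inv_def layout_def flag_array_def by (simp add: nr)
  qed
  ultimately show ?thesis by (blast intro: reaches_mono)
qed

lemma trace_body:
  assumes valid: "valid_instance js" and T: "trace_state js G s m" and c: "nreg s 10 = Suc c"
  shows "0 < m" "reaches prog s (\<lambda>s'. trace_state js G s' (m - 1)) 7"
proof -
  obtain V where R: "pc s = 92" "layout (length js) s"
    "\<forall>j<length js. pred_link js (dp_val js s) (dp_pred js s j) j"
    "\<forall>S. feasible js S \<longrightarrow> weight js S \<le> G"
    "m = length js - card V" "trace_inv js (dp_val js s) G V (nreg s 10)"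
    "flag_array s (3 * length js + 20) (length js) V"
    using T unfolding trace_state_def by blast
  have V: "feasible js V" using R(6) unfolding trace_inv_def by blast
  have cl: "c < length js" using R(6) c unfolding trace_inv_def by simp
  have step: "trace_inv js (dp_val js s) G (insert c V) (dp_pred js s c)" "c \<notin> V"
    using trace_inv_step[OF valid R(6)] R(3) c cl by auto
  have "V \<subseteq> {0..<length js} - {c}" using V step(2) unfolding feasible_def by auto
  then have "card V < length js"
    using cl card_mono[of "{0..<length js} - {c}" V] by (simp add: card_Diff_singleton)
  then show "0 < m" using R(5) by simp
  have "3 * length js + 20 + c \<noteq> 2 * length js + 20 + c" using cl by (cases js) auto
  then have "reaches prog s (\<lambda>s'. pc s' = 92 \<and> nreg s' 10 = dp_pred js s c \<and>
      nreg s' (3 * length js + 20 + c) = 1 \<and>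
      agree_except s s' {10, 12, 13, 3 * length js + 20 + c} {}) 7"
    using R(1,2) c unfolding layout_def
    by - ((rule reaches_exec, simp add: prog_simps, simp add: prog_simps)+, rule reaches_now,
      simp add: agree_except_def)
  moreover have "trace_state js G s' (m - 1)"
    if s': "pc s' = 92" "nreg s' 10 = dp_pred js s c" "nreg s' (3 * length js + 20 + c) = 1"
      "agree_except s s' {10, 12, 13, 3 * length js + 20 + c} {}" for s'
  proof -
    have nr: "nreg s' x = nreg s x" if "x \<notin> {10, 12, 13, 3 * length js + 20 + c}" for x
      using s'(4) that unfolding agree_except_def by blast
    have rr: "rreg s' = rreg s" using s'(4) unfolding agree_except_def by auto
    have pred: "dp_pred js s' j = dp_pred js s j" if "j < length js" for j
      using that cl by (intro nr) auto
    have "nreg s' (3 * length js + 20 + j) = nreg s (3 * length js + 20 + j)" if "j \<noteq> c" for j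
      using that by (intro nr) auto
    then have "flag_array s' (3 * length js + 20) (length js) (insert c V)"
      using R(7) s'(3) unfolding flag_array_def by (metis insert_iff)
    moreover have "m - 1 = length js - card (insert c V)"
      using R(5) step(2) feasible_finite[OF V] by simp
    moreover have "layout (length js) s'" using R(2) unfolding layout_def by (simp add: nr)
    ultimately show ?thesis
      using s'(1,2) R(3,4) step(1) pred unfolding trace_state_def rr by auto
  qed
  ultimately show "reaches prog s (\<lambda>s'. trace_state js G s' (m - 1)) 7" by (blast intro: reaches_mono)
qed

lemma trace_loop:
  assumes "valid_instance js"
  shows "trace_state js G s m \<Longrightarrow> reaches prog s (\<lambda>s'. \<exists>V. write_inv js V s' (length js)) (m * 7 + 2)"
proof (rule reaches_loop[where I = "trace_state js G"])
  fix s m assume "trace_state js G s m"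
  then show "reaches prog s (\<lambda>s'. \<exists>V. write_inv js V s' (length js)) 2 \<or>
      0 < m \<and> reaches prog s (\<lambda>s'. trace_state js G s' (m - 1)) 7"
    using trace_exit trace_body[OF assms] by (cases "nreg s 10") auto
qed

definition solved :: "job list \<Rightarrow> mstate \<Rightarrow> bool" where
  "solved js s \<longleftrightarrow> halted prog s \<and> optimal js (out_set (length js) s)"

lemma atLeastAtMost_1_15: "{1..15::nat} = {1, 2, 3, 4, 5, 6, 7, 8, 9, 10, 11, 12, 13, 14, 15}"
  unfolding set_eq_iff insert_iff empty_iff atLeastAtMost_iff by presburger

lemma write_exit:
  assumes "write_inv js V s m" "m \<le> 15"
  shows "reaches prog s (solved js) 34"
proof -
  have R: "pc s = 100" "nreg s 8 = m" "nreg s 6 = 3 * length js + 20" "nreg s 15 = 0"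
    "flag_array s (3 * length js + 20) (length js) V"
    "\<forall>x. m < x \<and> x \<le> length js \<and> 15 < x \<longrightarrow> nreg s x = (if x - 1 \<in> V then 1 else 0)"
    "optimal js V"
    using assms(1) unfolding write_inv_def by blast+
  have V: "V \<subseteq> {0..<length js}" using R(7) unfolding optimal_def feasible_def by blast
  have reach: "reaches prog s (\<lambda>s'. pc s' = 140 \<and> (\<forall>x>15. nreg s' x = nreg s x) \<and>
      (\<forall>r\<in>{1..15}. nreg s' r = nreg s (3 * length js + 19 + r))) 34"
    using R(1-4) assms(2) unfolding atLeastAtMost_1_15
    by - ((rule reaches_exec, simp add: prog_simps, simp add: prog_simps)+, rule reaches_now,
      simp add: ac_simps)
  have "solved js s'"
    if s': "pc s' = 140" "\<forall>x>15. nreg s' x = nreg s x"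
      "\<forall>r\<in>{1..15}. nreg s' r = nreg s (3 * length js + 19 + r)" for s'
  proof -
    have "nreg s' (Suc i) = (if i \<in> V then 1 else 0)" if "i < length js" for i
    proof (cases "Suc i \<le> 15")
      case True
      then have "nreg s' (Suc i) = nreg s (3 * length js + 20 + i)"
        using bspec[OF s'(3), of "Suc i"] by (simp add: ac_simps)
      then show ?thesis using R(5) that unfolding flag_array_def by simp
    next
      case False
      then show ?thesis using s'(2) R(6) assms(2) that by auto
    qed
    then have "out_set (length js) s' = V" using V unfolding out_set_def by (auto split: if_splits)
    moreover have "halted prog s'" using s'(1) unfolding halted_def by (simp add: prog_simps)
    ultimately show ?thesis using R(7) unfolding solved_def by simp
  qed
  with reach show ?thesis by (rule reaches_mono[OF _ order_refl]) auto
qed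

lemma write_body:
  assumes W: "write_inv js V s (Suc m)" and m: "15 \<le> m"
  shows "reaches prog s (\<lambda>s'. write_inv js V s' m) 9"
proof -
  have R: "pc s = 100" "nreg s 8 = Suc m" "m < length js" "nreg s 1 = 1"
    "nreg s 6 = 3 * length js + 20" "flag_array s (3 * length js + 20) (length js) V"
    "\<forall>x. Suc m < x \<and> x \<le> length js \<and> 15 < x \<longrightarrow> nreg s x = (if x - 1 \<in> V then 1 else 0)"
    using W unfolding write_inv_def by auto
  have reach: "reaches prog s (\<lambda>s'. pc s' = 100 \<and> nreg s' 8 = m \<and>
      nreg s' (Suc m) = nreg s (3 * length js + 20 + m) \<and> agree_except s s' {8, 12, 13, Suc m} {}) 9"
    using R(1,2,4,5) m
    by - ((rule reaches_exec, simp add: prog_simps, simp add: prog_simps)+, rule reaches_now,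
      simp add: agree_except_def ac_simps)
  have "write_inv js V s' m"
    if s': "pc s' = 100" "nreg s' 8 = m" "nreg s' (Suc m) = nreg s (3 * length js + 20 + m)"
      "agree_except s s' {8, 12, 13, Suc m} {}" for s'
  proof -
    have nr: "nreg s' x = nreg s x" if "x \<notin> {8, 12, 13, Suc m}" for x
      using s'(4) that unfolding agree_except_def by blast
    have "flag_array s' (3 * length js + 20) (length js) V"
      using R(6) R(3) unfolding flag_array_def by (simp add: nr)
    moreover have "nreg s' x = (if x - 1 \<in> V then 1 else 0)"
      if "m < x" "x \<le> length js" "15 < x" for x
      using R(6,7) s'(3) that R(3) m unfolding flag_array_def by (cases "x = Suc m") (auto simp: nr)
    ultimately show ?thesis
      using s'(1,2) W R(3) m unfolding write_inv_def by (simp add: nr)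
  qed
  with reach show ?thesis by (rule reaches_mono[OF _ order_refl]) auto
qed

lemma write_loop: "write_inv js V s m \<Longrightarrow> reaches prog s (solved js) (m * 9 + 34)"
proof (rule reaches_loop[where I = "write_inv js V"])
  fix s m assume "write_inv js V s m"
  then show "reaches prog s (solved js) 34 \<or> 0 < m \<and> reaches prog s (\<lambda>s'. write_inv js V s' (m - 1)) 9"
    using write_exit[of js V s m] write_body[of js V s "m - 1"] by (cases "m \<le> 15") auto
qed

lemma prog_solves:
  assumes "valid_instance js"
  shows "reaches prog (init js) (solved js) (200 * (length js + 1) ^ 2)"
proof -
  let ?n = "length js"
  have "reaches prog (init js) (\<lambda>s. outer_inv js s ?n) (17 + (5 * ?n * 7 + 5))"
    using init_reaches_copy by (rule reaches_trans) (rule copy_loop)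
  then have "reaches prog (init js) (\<lambda>s. \<exists>G. trace_state js G s ?n)
      (17 + (5 * ?n * 7 + 5) + (?n * (?n * 34 + 30) + 2))"
    by (rule reaches_trans) (rule outer_loop[OF assms])
  then have "reaches prog (init js) (\<lambda>s. \<exists>V. write_inv js V s ?n)
      (17 + (5 * ?n * 7 + 5) + (?n * (?n * 34 + 30) + 2) + (?n * 7 + 2))"
    by (rule reaches_trans) (use trace_loop[OF assms] in blast)
  then have "reaches prog (init js) (solved js)
      (17 + (5 * ?n * 7 + 5) + (?n * (?n * 34 + 30) + 2) + (?n * 7 + 2) + (?n * 9 + 34))"
    by (rule reaches_trans) (use write_loop in blast)
  then show ?thesis by (rule reaches_mono) (simp_all add: power2_eq_square algebra_simps)
qed

theorem theorem8:
  shows "\<exists>P. solves_ISC_polytime P"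
proof -
  have "\<exists>k\<le>200 * (length js + 1) ^ 2. halted prog (run prog k (init js)) \<and>
      optimal js (out_set (length js) (run prog k (init js)))"
    if "\<forall>j\<in>set js. valid_job j" for js
  proof -
    have "valid_instance js" using that unfolding valid_instance_def by simp
    then show ?thesis using prog_solves unfolding reaches_def solved_def by blast
  qed
  then show ?thesis unfolding solves_ISC_polytime_def by blast
qed

end
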